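(* Let $p$ be a prime and let $q$ be a prime with $p < q < 2p-1$ such that $2p-1$ is prime and $\{p, q, 2p-1\}$ is a symmetric triple. Write $q = p + d$. Then $d = \frac{p-1}{3}$ or $d = \frac{p-1}{2}$.
   Context: Two distinct primes $p$ and $q$ form a symmetric pair if $\gcd(p-1, q-1) = |p-q|$. A symmetric triple is a set of three primes such that any two of them form a symmetric pair. *)

theory Defs
  imports Complex_Main "HOL-Computational_Algebra.Primes"
begin

definition symmetric_pair :: "nat \<Rightarrow> nat \<Rightarrow> bool" where
  "symmetric_pair p q \<longleftrightarrow> prime p \<and> prime q \<and> p \<noteq> q \<and>
     int (gcd (p - 1) (q - 1)) = \<bar>int p - int q\<bar>"

definition symmetric_triple :: "nat \<Rightarrow> nat \<Rightarrow> nat \<Rightarrow> bool" where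
  "symmetric_triple a b c \<longleftrightarrow>
     symmetric_pair a b \<and> symmetric_pair a c \<and> symmetric_pair b c"

end

theory Submission
  imports Defs
begin

text \<open>Put \<open>d = q - p\<close>. The pair \<open>(p, q)\<close> gives \<open>d = gcd (p - 1) (q - 1)\<close>, so
  \<open>p - 1 = d k\<close> and \<open>q - 1 = d (k + 1)\<close>. The pair \<open>(q, 2p - 1)\<close> then says that
  \<open>2p - 1 - q = d (k - 1)\<close> divides \<open>q - 1 = d (k + 1)\<close>, hence \<open>k - 1\<close> divides \<open>2\<close>
  and \<open>k \<in> {2, 3}\<close>.\<close>

lemma symmetric_pair_gcd_eq_diff:
  assumes "symmetric_pair p q" and "p < q"
  shows "gcd (p - 1) (q - 1) = q - p"
  using assms unfolding symmetric_pair_def by auto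

lemma pred_dvd_succ_nat:
  fixes k :: nat
  assumes "k - 1 dvd k + 1"
  shows "k = 2 \<or> k = 3"
proof -
  have "k - 1 \<noteq> 0"
    using assms by (metis dvd_0_left_iff add_is_0 one_neq_zero)
  then have "k \<ge> 2"
    by simp
  then have "k - 1 dvd (k - 1) + 2"
    using assms by (simp add: numeral_2_eq_2)
  then have "k - 1 dvd 2"
    by (metis dvd_add_right_iff dvd_refl)
  then have "k - 1 \<le> 2"
    by (simp add: dvd_imp_le)
  with \<open>k \<ge> 2\<close> show ?thesis
    by auto
qed

lemma symmetric_pairs_with_double_pred:
  assumes "symmetric_pair p q" and "symmetric_pair q (2 * p - 1)"
    and "p < q" and "q < 2 * p - 1"
  shows "p - 1 = (q - p) * 2 \<or> p - 1 = (q - p) * 3"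
proof -
  define d where "d = q - p"
  have "d > 0"
    using \<open>p < q\<close> by (simp add: d_def)
  have "d dvd p - 1"
    using symmetric_pair_gcd_eq_diff[OF assms(1,3)] d_def by (metis gcd_dvd1)
  then obtain k where k: "p - 1 = d * k"
    by blast
  have "p \<ge> 1"
    using \<open>p < q\<close> \<open>q < 2 * p - 1\<close> by linarith
  have q_pred: "q - 1 = d * (k + 1)"
    using k \<open>p < q\<close> \<open>p \<ge> 1\<close> by (simp add: d_def)
  have "2 * p - 1 - q = d * (k - 1)"
    using k \<open>p < q\<close> \<open>p \<ge> 1\<close> by (simp add: d_def diff_mult_distrib2)
  moreover have "gcd (q - 1) (2 * p - 1 - 1) = 2 * p - 1 - q"
    using symmetric_pair_gcd_eq_diff[OF assms(2,4)] .
  ultimately have "d * (k - 1) dvd d * (k + 1)"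
    using q_pred by (metis gcd_dvd1)
  then have "k - 1 dvd k + 1"
    using nat_mult_dvd_cancel1[OF \<open>d > 0\<close>] by (simp only:)
  then have "k = 2 \<or> k = 3"
    by (rule pred_dvd_succ_nat)
  then show ?thesis
    using k by (auto simp: d_def)
qed

theorem theorem1:
  fixes p q d :: nat
  assumes "prime p" and "prime q" and "p < q" and "q < 2 * p - 1"
    and "prime (2 * p - 1)"
    and "symmetric_triple p q (2 * p - 1)"
    and "q = p + d"
  shows "real d = (real p - 1) / 3 \<or> real d = (real p - 1) / 2"
proof -
  have "p \<ge> 1"
    using \<open>p < q\<close> \<open>q < 2 * p - 1\<close> by linarith
  have "p - 1 = d * 2 \<or> p - 1 = d * 3"
    using symmetric_pairs_with_double_pred \<open>symmetric_triple p q (2 * p - 1)\<close>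
      \<open>p < q\<close> \<open>q < 2 * p - 1\<close> \<open>q = p + d\<close>
    unfolding symmetric_triple_def by fastforce
  then have "real p - 1 = real d * 2 \<or> real p - 1 = real d * 3"
    using \<open>p \<ge> 1\<close> by (metis of_nat_1 of_nat_diff of_nat_mult of_nat_numeral)
  then show ?thesis
    by auto
qed

end
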